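(* Let $M=\begin{bmatrix} r & s\\ a & b\end{bmatrix}$ be an integer matrix of rank two with $r\ge s>0$, $0<a\le b$ and $\gcd(r,s)=1$. For $\ell\in\mathbb{N}$ let $G_\ell(M)$ be the band graph of $M$. If $\ell<r+s-1$, then every connected component of $G_\ell(M)$ is finite. If $\ell\ge r+s-1$, then for every $w_0\in\{0,1,\dots,\ell\}$ there exists $z_0\in\mathbb{N}$ such that $(w_0,z_0)$ belongs to an infinite connected component of $G_\ell(M)$.
   Context: $\mathbb{N}=\{0,1,2,\dots\}$. For $Q\subseteq\mathbb{Z}^n$ and an integer $n\times m$ matrix $M$, the graph $G_Q(M)$ has vertex set $Q$, and $u,v\in Q$ are joined by an edge iff $u-v$ or $v-u$ is a column of $M$. A connected component is infinite if it has infinitely many vertices, finite otherwise. For a $2\times 2$ integer matrix $M$ with positive entries and $\ell\in\mathbb{N}$, the band graph is $G_\ell(M)=G_{Q_\ell}(M)$ with $Q_\ell=\{u\in\mathbb{N}^2\mid u_1\le \ell\}$. *)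

theory Defs
  imports Main
begin

text \<open>Points of Z^2 are pairs of integers. A 2 x m integer matrix is represented by
  the set C of its columns. The graph G_Q(M): vertex set Q, u and v adjacent iff
  u - v or v - u is a column.\<close>

definition vdiff :: "int \<times> int \<Rightarrow> int \<times> int \<Rightarrow> int \<times> int" where
  "vdiff u v = (fst u - fst v, snd u - snd v)"

definition graph_edge :: "(int \<times> int) set \<Rightarrow> (int \<times> int) set \<Rightarrow> int \<times> int \<Rightarrow> int \<times> int \<Rightarrow> bool" where
  "graph_edge Q C u v \<longleftrightarrow> u \<in> Q \<and> v \<in> Q \<and> (vdiff u v \<in> C \<or> vdiff v u \<in> C)"

definition component :: "(int \<times> int) set \<Rightarrow> (int \<times> int) set \<Rightarrow> int \<times> int \<Rightarrow> (int \<times> int) set" where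
  "component Q C u = {v. (graph_edge Q C)\<^sup>*\<^sup>* u v}"

definition cols2 :: "int \<Rightarrow> int \<Rightarrow> int \<Rightarrow> int \<Rightarrow> (int \<times> int) set" where
  "cols2 r s a b = {(r, a), (s, b)}"

definition band :: "nat \<Rightarrow> (int \<times> int) set" where
  "band l = {(x, y). 0 \<le> x \<and> 0 \<le> y \<and> x \<le> int l}"

end

theory Submission
  imports Defs "HOL-Number_Theory.Cong"
begin

text \<open>Write \<open>N = r + s\<close>. A vertex reached from \<open>(x\<^sub>0, y\<^sub>0)\<close> by a walk using the columns \<open>p\<close>
  and \<open>q\<close> times (with signs) has abscissa \<open>x\<^sub>0 + r p + s q \<equiv> x\<^sub>0 + r (p - q) (mod N)\<close>, and every
  step changes \<open>t = p - q\<close> by \<open>\<plusminus>1\<close>. If \<open>\<ell> < N - 1\<close>, the residue \<open>N - 1\<close> never occurs as an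
  abscissa, and as \<open>r\<close> is invertible modulo \<open>N\<close> it is hit by \<open>x\<^sub>0 + r t\<close> for some \<open>t\<close> in
  \<open>[0, N)\<close> and for \<open>t - N\<close>; hence \<open>|p - q| < N\<close> along every walk, and the abscissa together
  with \<open>p - q\<close> determines the vertex: components are finite.
  If \<open>\<ell> \<ge> N - 1\<close>, first walk down along \<open>-(r, a)\<close> into the strip \<open>0 \<le> x < N\<close>. There the
  greedy walk (add \<open>(r, a)\<close> while \<open>x < s\<close>, subtract \<open>(s, b)\<close> otherwise) stays in the strip and
  after \<open>N\<close> steps returns to the same abscissa, having used \<open>(r, a)\<close> exactly \<open>s\<close> times and
  \<open>(s, b)\<close> exactly \<open>r\<close> times; it thus shifts the vertex vertically by the nonzero amount
  \<open>a s - b r\<close>, and iterating produces infinitely many vertices.\<close>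

lemma graph_edge_add_column:
  assumes "(x, y) \<in> Q" "(x + c, y + d) \<in> Q" "(c, d) \<in> C"
  shows "graph_edge Q C (x, y) (x + c, y + d)"
  using assms by (auto simp: graph_edge_def vdiff_def)

lemma graph_edge_diff_column:
  assumes "(x, y) \<in> Q" "(x - c, y - d) \<in> Q" "(c, d) \<in> C"
  shows "graph_edge Q C (x, y) (x - c, y - d)"
  using assms by (auto simp: graph_edge_def vdiff_def)

lemma rtranclp_graph_edge_closed:
  assumes "(graph_edge Q C)\<^sup>*\<^sup>* u v" "u \<in> Q"
  shows "v \<in> Q"
  using assms by (induction rule: rtranclp_induct) (auto simp: graph_edge_def)

lemma graph_edge_cols2_cases:
  assumes "graph_edge Q (cols2 r s a b) v w"
  obtains i j where "(i, j) \<in> {(1, 0), (-1, 0), (0, 1), (0, -1)}"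
    and "w = (fst v + r * i + s * j, snd v + a * i + b * j)"
proof -
  from assms consider "vdiff w v = (r, a)" | "vdiff v w = (r, a)" | "vdiff w v = (s, b)" | "vdiff v w = (s, b)"
    unfolding graph_edge_def cols2_def by blast
  then show thesis
  proof cases
    case 1
    then show thesis
      by (intro that[of 1 0]) (auto simp: vdiff_def prod_eq_iff)
  next
    case 2
    then show thesis
      by (intro that[of "-1" 0]) (auto simp: vdiff_def prod_eq_iff)
  next
    case 3
    then show thesis
      by (intro that[of 0 1]) (auto simp: vdiff_def prod_eq_iff)
  next
    case 4
    then show thesis
      by (intro that[of 0 "-1"]) (auto simp: vdiff_def prod_eq_iff)
  qed
qed

lemma cols2_swap: "cols2 s r b a = cols2 r s a b"
  unfolding cols2_def by auto

subsection \<open>Narrow bands: finite components\<close>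

lemma cong_linear_solvable_in_range:
  fixes r N x c :: int
  assumes "gcd r N = 1" "N > 0"
  obtains t where "0 \<le> t" "t < N" "[x + r * t = c] (mod N)"
proof -
  obtain t' where "[r * t' = c - x] (mod N)"
    using cong_solve_dvd_int[of r N "c - x"] assms(1) by auto
  have "[r * (t' mod N) = r * t'] (mod N)"
    by (intro cong_scalar_left) (simp add: cong_def)
  also note \<open>[r * t' = c - x] (mod N)\<close>
  finally have "[x + r * (t' mod N) = x + (c - x)] (mod N)"
    by (intro cong_add cong_refl)
  then have "[x + r * (t' mod N) = c] (mod N)"
    by simp
  with assms(2) show thesis
    by (intro that[of "t' mod N"]) auto
qed

lemma interval_to_zero_step:
  fixes t t' :: int
  assumes "\<bar>t' - t\<bar> \<le> 1"
  shows "{min 0 t'..max 0 t'} \<subseteq> insert t' {min 0 t..max 0 t}"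
  using assms by (auto simp: min_def max_def)

text \<open>Since \<open>p - q\<close> moves by \<open>\<plusminus>1\<close> per step, every \<open>t\<close> between \<open>0\<close> and its current value
  was the value of \<open>p - q\<close> at some vertex of the walk, whose abscissa is \<open>(x\<^sub>0 + r t) mod (r + s)\<close>.\<close>

lemma band_reach_lattice_invariant:
  fixes r s a b x0 y0 :: int
  assumes reach: "(graph_edge (band l) (cols2 r s a b))\<^sup>*\<^sup>* (x0, y0) v"
    and x0: "0 \<le> x0" "x0 \<le> int l" and narrow: "int l < r + s"
  shows "\<exists>p q. v = (x0 + r * p + s * q, y0 + a * p + b * q) \<and>
    (\<forall>t \<in> {min 0 (p - q)..max 0 (p - q)}. (x0 + r * t) mod (r + s) \<le> int l)"
  using reach
proof (induction rule: rtranclp_induct)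
  case base
  have "x0 mod (r + s) \<le> int l"
    using x0 narrow by simp
  then show ?case
    by (intro exI[of _ 0]) simp
next
  case (step v w)
  then obtain p q where v: "v = (x0 + r * p + s * q, y0 + a * p + b * q)"
    and visited: "\<forall>t \<in> {min 0 (p - q)..max 0 (p - q)}. (x0 + r * t) mod (r + s) \<le> int l"
    by blast
  obtain i j where ij: "(i, j) \<in> {(1, 0), (-1, 0), (0, 1), (0, -1)}"
    and w: "w = (fst v + r * i + s * j, snd v + a * i + b * j)"
    using step.hyps(2) by (rule graph_edge_cols2_cases)
  have "w \<in> band l"
    using step.hyps(2) by (simp add: graph_edge_def)
  then have fw: "0 \<le> fst w" "fst w \<le> int l"
    by (auto simp: band_def)
  have w_eq: "w = (x0 + r * (p + i) + s * (q + j), y0 + a * (p + i) + b * (q + j))"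
    using v w by (simp add: algebra_simps)
  define t' where "t' = p + i - (q + j)"
  have "x0 + r * t' = fst w + (r + s) * (- (q + j))"
    using w_eq by (simp add: t'_def algebra_simps)
  then have "(x0 + r * t') mod (r + s) = fst w"
    using fw narrow by simp
  then have "(x0 + r * t') mod (r + s) \<le> int l"
    using fw by simp
  moreover have "{min 0 t'..max 0 t'} \<subseteq> insert t' {min 0 (p - q)..max 0 (p - q)}"
    using ij by (intro interval_to_zero_step) (auto simp: t'_def)
  ultimately have "\<forall>t \<in> {min 0 t'..max 0 t'}. (x0 + r * t) mod (r + s) \<le> int l"
    using visited by blast
  then show ?case
    unfolding t'_def by (intro exI[of _ "p + i"] exI[of _ "q + j"] conjI[OF w_eq])
qed

lemma band_component_finite:
  fixes r s a b :: int
  assumes r: "r > 0" and s: "s > 0" and coprime: "gcd r s = 1"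
    and narrow: "int l < r + s - 1" and u: "u \<in> band l"
  shows "finite (component (band l) (cols2 r s a b) u)"
proof -
  obtain x0 y0 where u_eq: "u = (x0, y0)"
    by force
  have x0: "0 \<le> x0" "x0 \<le> int l"
    using u u_eq by (auto simp: band_def)
  define N where "N = r + s"
  have N: "N > 0"
    using r s by (simp add: N_def)
  obtain t1 where t1: "0 \<le> t1" "t1 < N" "[x0 + r * t1 = N - 1] (mod N)"
    using cong_linear_solvable_in_range[of r N x0 "N - 1"] coprime N by (auto simp: N_def)
  have not_visited: "\<not> (x0 + r * t) mod N \<le> int l" if "t = t1 \<or> t = t1 - N" for t
  proof -
    have "[x0 + r * t = x0 + r * t1] (mod N)"
      using that by (auto simp: cong_iff_dvd_diff algebra_simps)
    then have "[x0 + r * t = N - 1] (mod N)"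
      using t1(3) by (rule cong_trans)
    then have "(x0 + r * t) mod N = (N - 1) mod N"
      unfolding cong_def .
    also have "\<dots> = N - 1"
      using N by (intro mod_pos_pos_trivial) auto
    finally show ?thesis
      using narrow by (simp add: N_def)
  qed
  define vertex where
    "vertex = (\<lambda>(x, t). let q = (x - x0 - r * t) div N in (x, y0 + a * (t + q) + b * q))"
  have "component (band l) (cols2 r s a b) u \<subseteq> vertex ` ({0..int l} \<times> {-N<..<N})"
  proof
    fix v
    assume "v \<in> component (band l) (cols2 r s a b) u"
    then have reach: "(graph_edge (band l) (cols2 r s a b))\<^sup>*\<^sup>* (x0, y0) v"
      by (simp add: component_def u_eq)
    obtain p q where v: "v = (x0 + r * p + s * q, y0 + a * p + b * q)"
      and visited: "\<forall>t \<in> {min 0 (p - q)..max 0 (p - q)}. (x0 + r * t) mod N \<le> int l"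
      using band_reach_lattice_invariant[OF reach x0] narrow by (auto simp: N_def)
    have "t1 \<notin> {min 0 (p - q)..max 0 (p - q)}" "t1 - N \<notin> {min 0 (p - q)..max 0 (p - q)}"
      using visited not_visited by blast+
    then have "- N < p - q" "p - q < N"
      using t1(1,2) by auto
    moreover have "fst v \<in> {0..int l}"
      using rtranclp_graph_edge_closed[OF reach] u u_eq by (auto simp: band_def)
    ultimately have "(fst v, p - q) \<in> {0..int l} \<times> {-N<..<N}"
      by simp
    moreover have "fst v - x0 - r * (p - q) = q * N"
      using v by (simp add: N_def algebra_simps)
    then have "v = vertex (fst v, p - q)"
      using N v by (simp add: vertex_def)
    ultimately show "v \<in> vertex ` ({0..int l} \<times> {-N<..<N})"
      by (rule rev_image_eqI)
  qed
  moreover have "finite (vertex ` ({0..int l} \<times> {-N<..<N}))"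
    by (intro finite_imageI finite_cartesian_product) simp_all
  ultimately show ?thesis
    by (rule finite_subset)
qed

subsection \<open>Wide bands: infinite components\<close>

lemma band_reach_column_multiple:
  assumes col: "(c, d) \<in> C" "0 \<le> c" "0 \<le> d" and xy: "0 \<le> x" "0 \<le> y"
    and top: "x + c * int k \<le> int l"
  shows "(graph_edge (band l) C)\<^sup>*\<^sup>* (x + c * int k, y + d * int k) (x, y)"
  using top
proof (induction k)
  case 0
  show ?case
    by simp
next
  case (Suc k)
  have ck: "0 \<le> c * int k" "0 \<le> d * int k"
    using col by simp_all
  have "x + c * int k \<le> int l"
    using Suc.prems col by (simp add: algebra_simps)
  moreover have "graph_edge (band l) C (x + c * int (Suc k), y + d * int (Suc k))
      (x + c * int (Suc k) - c, y + d * int (Suc k) - d)"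
    using Suc.prems col xy ck by (intro graph_edge_diff_column) (auto simp: band_def algebra_simps)
  ultimately show ?case
    using Suc.IH by (auto simp: algebra_simps intro: converse_rtranclp_into_rtranclp)
qed

lemma band_greedy_walk:
  fixes r s a b x y :: int
  assumes r: "r > 0" and s: "s > 0" and a: "0 \<le> a" and b: "0 \<le> b"
    and wide: "r + s - 1 \<le> int l" and x: "0 \<le> x" "x < r + s" and y: "b * (r + s) \<le> y"
    and k: "int k \<le> r + s"
  shows "\<exists>u d. 0 \<le> u \<and> 0 \<le> d \<and> u + d = int k \<and> 0 \<le> x + r * u - s * d \<and> x + r * u - s * d < r + s
    \<and> (graph_edge (band l) (cols2 r s a b))\<^sup>*\<^sup>* (x, y) (x + r * u - s * d, y + a * u - b * d)"
  using k
proof (induction k)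
  case 0
  show ?case
    using x by (intro exI[of _ 0]) auto
next
  case (Suc k)
  then obtain u d where ud: "0 \<le> u" "0 \<le> d" "u + d = int k"
    and x': "0 \<le> x + r * u - s * d" "x + r * u - s * d < r + s"
    and reach: "(graph_edge (band l) (cols2 r s a b))\<^sup>*\<^sup>* (x, y) (x + r * u - s * d, y + a * u - b * d)"
    by auto
  have "b * d + b \<le> b * (r + s)"
    using b ud Suc.prems mult_left_mono[of "d + 1" "r + s" b] by (simp add: distrib_left)
  moreover have "0 \<le> a * u"
    using a ud by simp
  ultimately have y': "0 \<le> y + a * u - b * d - b"
    using y by linarith
  show ?case
  proof (cases "x + r * u - s * d < s")
    case True
    have "graph_edge (band l) (cols2 r s a b) (x + r * u - s * d, y + a * u - b * d)
        (x + r * u - s * d + r, y + a * u - b * d + a)"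
      using True x' y' r a b wide by (intro graph_edge_add_column) (auto simp: band_def cols2_def)
    moreover have "(x + r * u - s * d + r, y + a * u - b * d + a)
        = (x + r * (u + 1) - s * d, y + a * (u + 1) - b * d)"
      by (simp add: algebra_simps)
    ultimately show ?thesis
      using ud x' True reach r rtranclp.rtrancl_into_rtrancl[OF reach]
      by (intro exI[of _ "u + 1"] exI[of _ d]) (simp add: distrib_left)
  next
    case False
    have "graph_edge (band l) (cols2 r s a b) (x + r * u - s * d, y + a * u - b * d)
        (x + r * u - s * d - s, y + a * u - b * d - b)"
      using False x' y' s a b wide by (intro graph_edge_diff_column) (auto simp: band_def cols2_def)
    moreover have "(x + r * u - s * d - s, y + a * u - b * d - b)
        = (x + r * u - s * (d + 1), y + a * u - b * (d + 1))"
      by (simp add: algebra_simps)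
    ultimately show ?thesis
      using ud x' False reach s rtranclp.rtrancl_into_rtrancl[OF reach]
      by (intro exI[of _ u] exI[of _ "d + 1"]) (simp add: distrib_left)
  qed
qed

lemma band_reach_period:
  fixes r s a b x y :: int
  assumes r: "r > 0" and s: "s > 0" and a: "0 \<le> a" and b: "0 \<le> b"
    and wide: "r + s - 1 \<le> int l" and x: "0 \<le> x" "x < r + s" and y: "b * (r + s) \<le> y"
  shows "(graph_edge (band l) (cols2 r s a b))\<^sup>*\<^sup>* (x, y) (x, y + a * s - b * r)"
proof -
  obtain u d where ud: "u + d = r + s"
    and x': "0 \<le> x + r * u - s * d" "x + r * u - s * d < r + s"
    and reach: "(graph_edge (band l) (cols2 r s a b))\<^sup>*\<^sup>* (x, y) (x + r * u - s * d, y + a * u - b * d)"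
    using band_greedy_walk[OF r s a b wide x y, of "nat (r + s)"] r s by auto
  have d: "d = r + s - u"
    using ud by simp
  have "x + r * u - s * d = x + (r + s) * (u - s)"
    unfolding d by (simp add: algebra_simps)
  then have "\<bar>(r + s) * (u - s)\<bar> < r + s"
    using x x' by linarith
  then have "u = s"
    using r s by (simp add: abs_mult)
  moreover from this have "d = r"
    using ud by simp
  ultimately show ?thesis
    using reach by (simp add: mult.commute)
qed

lemma band_reach_abs_period:
  fixes r s a b x y :: int
  assumes r: "r > 0" and s: "s > 0" and a: "0 \<le> a" and b: "0 \<le> b"
    and wide: "r + s - 1 \<le> int l" and x: "0 \<le> x" "x < r + s" and y: "max a b * (r + s) \<le> y"
  shows "(graph_edge (band l) (cols2 r s a b))\<^sup>*\<^sup>* (x, y) (x, y + \<bar>a * s - b * r\<bar>)"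
proof (cases "b * r \<le> a * s")
  case True
  have "b * (r + s) \<le> max a b * (r + s)"
    using r s by (intro mult_right_mono) auto
  with y have "b * (r + s) \<le> y"
    by linarith
  with band_reach_period[OF r s a b wide x] True show ?thesis
    by (simp add: add_diff_eq)
next
  case False
  have "a * (s + r) \<le> max a b * (r + s)"
    using r s by (simp add: add.commute mult_right_mono)
  with y have "a * (s + r) \<le> y"
    by linarith
  with band_reach_period[OF s r b a, of l x y] wide x False show ?thesis
    by (simp add: cols2_swap algebra_simps)
qed

lemma band_reach_abs_period_multiple:
  fixes r s a b x y :: int
  assumes r: "r > 0" and s: "s > 0" and a: "0 \<le> a" and b: "0 \<le> b"
    and wide: "r + s - 1 \<le> int l" and x: "0 \<le> x" "x < r + s" and y: "max a b * (r + s) \<le> y"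
  shows "(graph_edge (band l) (cols2 r s a b))\<^sup>*\<^sup>* (x, y) (x, y + int k * \<bar>a * s - b * r\<bar>)"
proof (induction k)
  case 0
  show ?case
    by simp
next
  case (Suc k)
  have "max a b * (r + s) \<le> y + int k * \<bar>a * s - b * r\<bar>"
    using y by (simp add: add_increasing2)
  from band_reach_abs_period[OF r s a b wide x this] Suc.IH show ?case
    by (simp add: algebra_simps)
qed

lemma band_component_infinite:
  fixes r s a b :: int
  assumes r: "r > 0" and s: "s > 0" and a: "0 \<le> a" and b: "0 \<le> b"
    and rank: "a * s \<noteq> b * r" and wide: "r + s - 1 \<le> int l" and w0: "w0 \<le> l"
  shows "\<exists>z0 :: nat. infinite (component (band l) (cols2 r s a b) (int w0, int z0))"
proof -
  define y where "y = max a b * (r + s)"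
  define k where "k = nat (int w0 div r)"
  define x where "x = int w0 mod r"
  have "0 \<le> x" "x < r"
    using r by (simp_all add: x_def)
  then have x: "0 \<le> x" "x < r + s"
    using s by simp_all
  have y: "0 \<le> y"
    using a r s by (simp add: y_def)
  have "int k = int w0 div r"
    using r by (simp add: k_def pos_imp_zdiv_nonneg_iff)
  then have w0_eq: "int w0 = x + r * int k"
    by (simp add: x_def)
  have "(r, a) \<in> cols2 r s a b"
    by (simp add: cols2_def)
  from band_reach_column_multiple[OF this _ a x(1) y, of k l] r w0 w0_eq
  have descend: "(graph_edge (band l) (cols2 r s a b))\<^sup>*\<^sup>* (int w0, int (nat (y + a * int k))) (x, y)"
    using a y by simp
  define D where "D = \<bar>a * s - b * r\<bar>"
  have "D \<noteq> 0"
    using rank by (simp add: D_def)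
  then have "inj (\<lambda>n :: nat. (x, y + int n * D))"
    by (simp add: inj_def)
  then have "infinite (range (\<lambda>n :: nat. (x, y + int n * D)))"
    using finite_imageD infinite_UNIV_nat by blast
  moreover have "range (\<lambda>n :: nat. (x, y + int n * D))
      \<subseteq> component (band l) (cols2 r s a b) (int w0, int (nat (y + a * int k)))"
  proof
    fix v
    assume "v \<in> range (\<lambda>n :: nat. (x, y + int n * D))"
    then obtain n where v: "v = (x, y + int n * D)"
      by blast
    have "(graph_edge (band l) (cols2 r s a b))\<^sup>*\<^sup>* (x, y) v"
      unfolding v D_def using band_reach_abs_period_multiple[OF r s a b wide x] by (simp add: y_def)
    with descend show "v \<in> component (band l) (cols2 r s a b) (int w0, int (nat (y + a * int k)))"
      unfolding component_def by simp
  qed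
  ultimately show ?thesis
    using infinite_super by blast
qed

theorem proposition2p5:
  fixes r s a b :: int and l :: nat
  assumes rank2: "r * b - s * a \<noteq> 0"
    and "r \<ge> s" and "s > 0" and "0 < a" and "a \<le> b" and "gcd r s = 1"
  shows "(int l < r + s - 1 \<longrightarrow>
            (\<forall>u \<in> band l. finite (component (band l) (cols2 r s a b) u)))
       \<and> (int l \<ge> r + s - 1 \<longrightarrow>
            (\<forall>w0 \<le> l. \<exists>z0 :: nat.
                infinite (component (band l) (cols2 r s a b) (int w0, int z0))))"
proof -
  have r: "r > 0" and a: "0 \<le> a" and b: "0 \<le> b"
    using assms by linarith+
  have rank: "a * s \<noteq> b * r"
    using rank2 by (simp add: mult.commute)
  show ?thesis
  proof (intro conjI impI ballI allI)
    fix u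
    assume "int l < r + s - 1" "u \<in> band l"
    with r \<open>s > 0\<close> \<open>gcd r s = 1\<close> show "finite (component (band l) (cols2 r s a b) u)"
      by (rule band_component_finite)
  next
    fix w0
    assume "r + s - 1 \<le> int l" "w0 \<le> l"
    with r \<open>s > 0\<close> a b rank
    show "\<exists>z0 :: nat. infinite (component (band l) (cols2 r s a b) (int w0, int z0))"
      by (rule band_component_infinite)
  qed
qed

end
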